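(* Let $R$ be a ring with identity and involution $*$, and let $a,b\in R$ be core invertible with core inverses $a^{\oplus}$ and $b^{\oplus}$. If $ab=0$ and $a^*b=0$, then $a+b$ is core invertible and $$(a+b)^{\oplus} = b^{\pi}a^{\oplus} + b^{\oplus},$$ where $b^{\pi}=1-b^{\oplus}b$.
   Context: An involution on $R$ satisfies $(a^* )^*=a$, $(ab)^*=b^*a^*$, $(a+b)^*=a^*+b^*$. An element $x\in R$ is a core inverse of $a$ if $axa=a$, $xR=aR$ and $Rx=Ra^*$; it is unique when it exists and is denoted $a^{\oplus}$. *)

theory Defs
  imports Main
begin

definition is_involution :: "('a::ring_1 \<Rightarrow> 'a) \<Rightarrow> bool" where
  "is_involution s \<longleftrightarrow>
     (\<forall>a. s (s a) = a) \<and> (\<forall>a b. s (a * b) = s b * s a) \<and> (\<forall>a b. s (a + b) = s a + s b)"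

definition right_ideal :: "'a::ring_1 \<Rightarrow> 'a set" where
  "right_ideal a = {a * r | r. True}"

definition left_ideal :: "'a::ring_1 \<Rightarrow> 'a set" where
  "left_ideal a = {r * a | r. True}"

definition is_core_inverse :: "('a::ring_1 \<Rightarrow> 'a) \<Rightarrow> 'a \<Rightarrow> 'a \<Rightarrow> bool" where
  "is_core_inverse s a x \<longleftrightarrow>
     a * x * a = a \<and> right_ideal x = right_ideal a \<and> left_ideal x = left_ideal (s a)"

definition core_invertible :: "('a::ring_1 \<Rightarrow> 'a) \<Rightarrow> 'a \<Rightarrow> bool" where
  "core_invertible s a \<longleftrightarrow> (\<exists>x. is_core_inverse s a x)"

end

theory Submission
  imports Defs
begin

text \<open>
  A core inverse is characterised equationally: x is the core inverse of a iff
  \<open>a x a = a\<close>, \<open>(a x)\<^sup>* = a x\<close>, \<open>x a\<^sup>2 = a\<close> and \<open>a x\<^sup>2 = x\<close>.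
  Since \<open>a\<^sup>\<oplus> \<in> R a\<^sup>*\<close> and \<open>b\<^sup>\<oplus> \<in> b R\<close>, the hypotheses \<open>a b = 0 = a\<^sup>* b\<close> make all
  cross terms vanish: \<open>(a + b) y = a a\<^sup>\<oplus> + b b\<^sup>\<oplus>\<close> for the proposed inverse y,
  a sum of two symmetric elements, and the remaining identities reduce to
  those of \<open>a\<^sup>\<oplus>\<close> and \<open>b\<^sup>\<oplus>\<close>.
\<close>

lemma involution_involutive: "is_involution s \<Longrightarrow> s (s u) = u"
  and involution_mult: "is_involution s \<Longrightarrow> s (u * v) = s v * s u"
  and involution_add: "is_involution s \<Longrightarrow> s (u + v) = s u + s v"
  unfolding is_involution_def by auto

lemma involution_zero: "is_involution s \<Longrightarrow> s 0 = (0::'a::ring_1)"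
  using involution_add[of s 0 0] by simp

lemma core_inverse_in_right_ideal:
  "is_core_inverse s a x \<Longrightarrow> \<exists>r. x = a * r"
proof -
  assume "is_core_inverse s a x"
  moreover have "x \<in> right_ideal x" unfolding right_ideal_def by (auto intro: exI[of _ 1])
  ultimately show ?thesis unfolding is_core_inverse_def right_ideal_def by auto
qed

lemma in_right_ideal_of_core_inverse:
  "is_core_inverse s a x \<Longrightarrow> \<exists>r. a = x * r"
proof -
  assume "is_core_inverse s a x"
  moreover have "a \<in> right_ideal a" unfolding right_ideal_def by (auto intro: exI[of _ 1])
  ultimately show ?thesis unfolding is_core_inverse_def right_ideal_def by auto
qed

lemma core_inverse_in_left_ideal:
  "is_core_inverse s a x \<Longrightarrow> \<exists>r. x = r * s a"
proof -
  assume "is_core_inverse s a x"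
  moreover have "x \<in> left_ideal x" unfolding left_ideal_def by (auto intro: exI[of _ 1])
  ultimately show ?thesis unfolding is_core_inverse_def left_ideal_def by auto
qed

lemma core_inverse_mult_eq_0:
  assumes "is_core_inverse s a x" and "s a * c = 0"
  shows "x * c = 0"
proof -
  obtain r where "x = r * s a" using core_inverse_in_left_ideal[OF assms(1)] ..
  with assms(2) show ?thesis by (simp add: mult.assoc)
qed

lemma mult_core_inverse_eq_0:
  assumes "is_core_inverse s a x" and "c * a = 0"
  shows "c * x = 0"
proof -
  obtain r where "x = a * r" using core_inverse_in_right_ideal[OF assms(1)] ..
  with assms(2) show ?thesis by (metis mult.assoc mult_zero_left)
qed

lemma core_inverse_equations:
  fixes s :: "'a::ring_1 \<Rightarrow> 'a"
  assumes inv: "is_involution s" and core: "is_core_inverse s a x"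
  shows "a * x * a = a" "s (a * x) = a * x" "x * a * a = a" "a * x * x = x"
proof -
  note sm = involution_mult[OF inv]
  have axa: "a * x * a = a" using core unfolding is_core_inverse_def by blast
  obtain r where r: "x = a * r" using core_inverse_in_right_ideal[OF core] ..
  obtain q where q: "a = x * q" using in_right_ideal_of_core_inverse[OF core] ..
  obtain p where p: "x = p * s a" using core_inverse_in_left_ideal[OF core] ..
  have x_sym: "x = x * s (a * x)"
  proof -
    have "s a = s a * s x * s a" using axa sm by (metis mult.assoc)
    then have "x = p * (s a * s x * s a)" using p by simp
    also have "\<dots> = x * (s x * s a)" using p by (simp add: mult.assoc)
    finally show ?thesis using sm by simp
  qed
  have ax: "a * x = a * x * s (a * x)" using x_sym by (metis mult.assoc)
  \<comment> \<open>the right-hand side is symmetric, being of the form \<open>u u\<^sup>*\<close>\<close>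
  then have sym: "s (a * x) = a * x"
    by (metis sm involution_involutive[OF inv])
  have xax: "x * a * x = x" using x_sym sym by (simp add: mult.assoc)
  show "a * x * a = a" by (fact axa)
  show "s (a * x) = a * x" by (fact sym)
  show "x * a * a = a" using xax q by (metis mult.assoc)
  show "a * x * x = x" using axa r by (metis mult.assoc)
qed

lemma core_inverse_of_equations:
  fixes s :: "'a::ring_1 \<Rightarrow> 'a"
  assumes inv: "is_involution s" and axa: "a * x * a = a" and sym: "s (a * x) = a * x"
    and xaa: "x * a * a = a" and axx: "a * x * x = x"
  shows "is_core_inverse s a x"
proof -
  note sm = involution_mult[OF inv]
  have xax: "x * a * x = x"
    by (metis axx xaa mult.assoc)
  have x_right: "x = a * (x * x)" and a_right: "a = x * (a * a)"
    using axx xaa by (simp_all add: mult.assoc)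
  have x_left: "x = (x * s x) * s a"
  proof -
    have "x = x * s (a * x)" using xax sym by (simp add: mult.assoc)
    then show ?thesis using sm by (simp add: mult.assoc)
  qed
  have sa_left: "s a = (s a * a) * x"
  proof -
    have "s a = s a * s (a * x)" using axa sm by (metis mult.assoc)
    then show ?thesis using sym by (simp add: mult.assoc)
  qed
  have "right_ideal x = right_ideal a"
    unfolding right_ideal_def by (auto, metis x_right mult.assoc, metis a_right mult.assoc)
  moreover have "left_ideal x = left_ideal (s a)"
    unfolding left_ideal_def by (auto, metis x_left mult.assoc, metis sa_left mult.assoc)
  ultimately show ?thesis unfolding is_core_inverse_def using axa by blast
qed

lemma is_core_inverse_iff:
  "is_involution s \<Longrightarrow> is_core_inverse s a x \<longleftrightarrow>
     a * x * a = a \<and> s (a * x) = a * x \<and> x * a * a = a \<and> a * x * x = x"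
  using core_inverse_equations core_inverse_of_equations by metis

context
  fixes s :: "'a::ring_1 \<Rightarrow> 'a" and a b ac bc :: 'a
  assumes inv: "is_involution s"
    and core_a: "is_core_inverse s a ac"
    and core_b: "is_core_inverse s b bc"
    and ab: "a * b = 0"
    and sab: "s a * b = 0"
begin

lemma involution_b_mult_a_eq_0: "s b * a = 0"
  using sab involution_mult[OF inv] involution_involutive[OF inv] involution_zero[OF inv]
  by metis

lemma orthogonality:
  "ac * b = 0" "bc * a = 0" "a * bc = 0" "bc * ac = 0" "ac * bc = 0"
proof -
  show acb: "ac * b = 0" by (rule core_inverse_mult_eq_0[OF core_a sab])
  show bca: "bc * a = 0" by (rule core_inverse_mult_eq_0[OF core_b involution_b_mult_a_eq_0])
  show "a * bc = 0" by (rule mult_core_inverse_eq_0[OF core_b ab])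
  show "bc * ac = 0" by (rule mult_core_inverse_eq_0[OF core_a bca])
  show "ac * bc = 0" by (rule mult_core_inverse_eq_0[OF core_b acb])
qed

lemma add_mult_candidate:
  "(a + b) * ((1 - bc * b) * ac + bc) = a * ac + b * bc"
proof -
  have "(a + b) * ((1 - bc * b) * ac + bc)
      = a * ac - a * bc * b * ac + a * bc + b * ac - b * bc * b * ac + b * bc"
    by (simp add: algebra_simps)
  also have "\<dots> = a * ac + b * bc"
    using orthogonality core_inverse_equations(1)[OF inv core_b] by simp
  finally show ?thesis .
qed

lemma candidate_mult_add:
  "((1 - bc * b) * ac + bc) * (a + b) = (1 - bc * b) * ac * a + bc * b"
proof -
  have "((1 - bc * b) * ac + bc) * (a + b)
      = (1 - bc * b) * (ac * a) + (1 - bc * b) * (ac * b) + bc * a + bc * b"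
    by (simp add: algebra_simps)
  then show ?thesis using orthogonality by (simp add: mult.assoc)
qed

lemma candidate_inner_inverse:
  "(a + b) * ((1 - bc * b) * ac + bc) * (a + b) = a + b"
proof -
  have "(a + b) * ((1 - bc * b) * ac + bc) * (a + b)
      = a * ac * a + a * (ac * b) + b * (bc * a) + b * bc * b"
    unfolding add_mult_candidate by (simp add: algebra_simps)
  then show ?thesis
    using core_inverse_equations(1)[OF inv core_a] core_inverse_equations(1)[OF inv core_b]
      orthogonality
    by simp
qed

lemma add_mult_candidate_symmetric:
  "s ((a + b) * ((1 - bc * b) * ac + bc)) = (a + b) * ((1 - bc * b) * ac + bc)"
  using core_inverse_equations(2)[OF inv core_a] core_inverse_equations(2)[OF inv core_b]
    involution_add[OF inv]
  unfolding add_mult_candidate by simp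

lemma candidate_mult_add_square:
  "((1 - bc * b) * ac + bc) * (a + b) * (a + b) = a + b"
proof -
  have "((1 - bc * b) * ac + bc) * (a + b) * (a + b)
      = (1 - bc * b) * (ac * a * a) + (1 - bc * b) * ac * (a * b) + bc * b * a + bc * b * b"
    unfolding candidate_mult_add by (simp add: algebra_simps)
  then show ?thesis
    using core_inverse_equations(3)[OF inv core_a] core_inverse_equations(3)[OF inv core_b] ab
    by (simp add: algebra_simps)
qed

lemma add_mult_candidate_square:
  "(a + b) * ((1 - bc * b) * ac + bc) * ((1 - bc * b) * ac + bc) = (1 - bc * b) * ac + bc"
proof -
  define y where "y = (1 - bc * b) * ac + bc"
  have "(a + b) * y * y = (a * ac + b * bc) * y"
    unfolding y_def add_mult_candidate ..
  also have "\<dots> = a * ac * ac - a * (ac * bc) * b * ac + a * (ac * bc)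
      + b * (bc * ac) - (b * bc * bc) * b * ac + b * bc * bc"
    unfolding y_def by (simp add: algebra_simps)
  also have "\<dots> = y"
    using core_inverse_equations(4)[OF inv core_a] core_inverse_equations(4)[OF inv core_b]
      orthogonality
    unfolding y_def by (simp add: algebra_simps)
  finally show ?thesis unfolding y_def .
qed

end

theorem theorem4p3:
  fixes s :: "'a::ring_1 \<Rightarrow> 'a" and a b ac bc :: 'a
  assumes "is_involution s"
    and "is_core_inverse s a ac"
    and "is_core_inverse s b bc"
    and "a * b = 0"
    and "s a * b = 0"
  shows "core_invertible s (a + b)
         \<and> is_core_inverse s (a + b) ((1 - bc * b) * ac + bc)"
proof -
  have "is_core_inverse s (a + b) ((1 - bc * b) * ac + bc)"
    unfolding is_core_inverse_iff[OF assms(1)]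
    using candidate_inner_inverse[OF assms] add_mult_candidate_symmetric[OF assms]
      candidate_mult_add_square[OF assms] add_mult_candidate_square[OF assms]
    by blast
  then show ?thesis unfolding core_invertible_def by blast
qed

end
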